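(* The full subcategory of $\mathrm{Vect}_{\mathbb{F}}^{\mathbb{M}^{\circ}}$ consisting of pointwise finite-dimensional, sequentially continuous functors is a weak Serre subcategory: if $F_1\to F_2\to F_3\to F_4\to F_5$ is an exact sequence of functors $\mathbb{M}^{\circ}\to\mathrm{Vect}_{\mathbb{F}}$ with $F_1,F_2,F_4,F_5$ pointwise finite-dimensional and sequentially continuous, then $F_3$ is pointwise finite-dimensional and sequentially continuous.
   Context: Fix a field $\mathbb{F}$. Equip $\mathbb{R}^2$ with the partial order $(x,y)\preceq(x',y')$ iff $x'\le x$ and $y\le y'$. Fix reals $a<b$ and let $\mathbb{M}=\{(x,y): a\le x+y\le b\}$. Functors $\mathbb{M}^{\circ}\to\mathrm{Vect}_{\mathbb{F}}$ are contravariant in $\preceq$. A functor $G$ is sequentially continuous if for every $\preceq$-increasing sequence $(u_k)$ in $\mathbb{M}$ converging (Euclidean) to $u$, the natural map $G(u)\to\varprojlim_kG(u_k)$ is an isomorphism. *)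

theory Defs
  imports "HOL-Analysis.Analysis"
begin

definition leM :: "real \<times> real \<Rightarrow> real \<times> real \<Rightarrow> bool" where
  "leM p q \<longleftrightarrow> fst q \<le> fst p \<and> snd p \<le> snd q"

definition Mstrip :: "real \<Rightarrow> real \<Rightarrow> (real \<times> real) set" where
  "Mstrip a b = {p. a \<le> fst p + snd p \<and> fst p + snd p \<le> b}"

definition lin_on :: "('k::field \<Rightarrow> 'v::ab_group_add \<Rightarrow> 'v) \<Rightarrow> ('k \<Rightarrow> 'w::ab_group_add \<Rightarrow> 'w)
    \<Rightarrow> 'v set \<Rightarrow> ('v \<Rightarrow> 'w) \<Rightarrow> bool" where
  "lin_on s1 s2 S f \<longleftrightarrow>
     (\<forall>x\<in>S. \<forall>y\<in>S. f (x + y) = f x + f y) \<and> (\<forall>c. \<forall>x\<in>S. f (s1 c x) = s2 c (f x))"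

text \<open>The vector space G(u) is the subspace Obj u of the
  ambient k-vector space (type 'v with scalar multiplication s); for u \<preceq> w in M,
  Mor u w : G(w) -> G(u) is the structure map (contravariant in \<preceq>).\<close>
definition is_functor :: "(real \<times> real) set \<Rightarrow> ('k::field \<Rightarrow> 'v::ab_group_add \<Rightarrow> 'v)
    \<Rightarrow> (real \<times> real \<Rightarrow> 'v set) \<Rightarrow> (real \<times> real \<Rightarrow> real \<times> real \<Rightarrow> 'v \<Rightarrow> 'v) \<Rightarrow> bool" where
  "is_functor M s Obj Mor \<longleftrightarrow>
     vector_space s \<and>
     (\<forall>u\<in>M. module.subspace s (Obj u)) \<and>
     (\<forall>u\<in>M. \<forall>w\<in>M. leM u w \<longrightarrow> Mor u w ` Obj w \<subseteq> Obj u \<and> lin_on s s (Obj w) (Mor u w)) \<and>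
     (\<forall>u\<in>M. \<forall>x\<in>Obj u. Mor u u x = x) \<and>
     (\<forall>u\<in>M. \<forall>v\<in>M. \<forall>w\<in>M. leM u v \<longrightarrow> leM v w \<longrightarrow>
        (\<forall>x\<in>Obj w. Mor u v (Mor v w x) = Mor u w x))"

definition is_nat_trans :: "(real \<times> real) set
    \<Rightarrow> ('k::field \<Rightarrow> 'v::ab_group_add \<Rightarrow> 'v) \<Rightarrow> (real \<times> real \<Rightarrow> 'v set) \<Rightarrow> (real \<times> real \<Rightarrow> real \<times> real \<Rightarrow> 'v \<Rightarrow> 'v)
    \<Rightarrow> ('k \<Rightarrow> 'w::ab_group_add \<Rightarrow> 'w) \<Rightarrow> (real \<times> real \<Rightarrow> 'w set) \<Rightarrow> (real \<times> real \<Rightarrow> real \<times> real \<Rightarrow> 'w \<Rightarrow> 'w)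
    \<Rightarrow> (real \<times> real \<Rightarrow> 'v \<Rightarrow> 'w) \<Rightarrow> bool" where
  "is_nat_trans M s1 Obj1 Mor1 s2 Obj2 Mor2 \<eta> \<longleftrightarrow>
     (\<forall>u\<in>M. \<eta> u ` Obj1 u \<subseteq> Obj2 u \<and> lin_on s1 s2 (Obj1 u) (\<eta> u)) \<and>
     (\<forall>u\<in>M. \<forall>w\<in>M. leM u w \<longrightarrow> (\<forall>x\<in>Obj1 w. \<eta> u (Mor1 u w x) = Mor2 u w (\<eta> w x)))"

definition exact_at :: "(real \<times> real) set \<Rightarrow> (real \<times> real \<Rightarrow> 'v set) \<Rightarrow> (real \<times> real \<Rightarrow> 'v \<Rightarrow> 'w)
    \<Rightarrow> (real \<times> real \<Rightarrow> 'w::zero set) \<Rightarrow> (real \<times> real \<Rightarrow> 'w \<Rightarrow> 'x::zero) \<Rightarrow> bool" where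
  "exact_at M Obj1 \<eta> Obj2 \<theta> \<longleftrightarrow>
     (\<forall>u\<in>M. \<eta> u ` Obj1 u = {y \<in> Obj2 u. \<theta> u y = 0})"

definition pfd :: "(real \<times> real) set \<Rightarrow> ('k::field \<Rightarrow> 'v::ab_group_add \<Rightarrow> 'v) \<Rightarrow> (real \<times> real \<Rightarrow> 'v set) \<Rightarrow> bool" where
  "pfd M s Obj \<longleftrightarrow> (\<forall>u\<in>M. \<exists>B. finite B \<and> B \<subseteq> Obj u \<and> module.span s B = Obj u)"

definition invlim :: "(real \<times> real \<Rightarrow> 'v set) \<Rightarrow> (real \<times> real \<Rightarrow> real \<times> real \<Rightarrow> 'v \<Rightarrow> 'v)
    \<Rightarrow> (nat \<Rightarrow> real \<times> real) \<Rightarrow> (nat \<Rightarrow> 'v) set" where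
  "invlim Obj Mor uu = {y. (\<forall>k. y k \<in> Obj (uu k)) \<and> (\<forall>k l. k \<le> l \<longrightarrow> Mor (uu k) (uu l) (y l) = y k)}"

text \<open>Sequential continuity: for every \<preceq>-increasing sequence in M converging (Euclidean)
  to u, the natural map G(u) -> lim G(u_k) is an isomorphism (it is linear, so bijective).\<close>
definition seq_cont :: "(real \<times> real) set \<Rightarrow> (real \<times> real \<Rightarrow> 'v set)
    \<Rightarrow> (real \<times> real \<Rightarrow> real \<times> real \<Rightarrow> 'v \<Rightarrow> 'v) \<Rightarrow> bool" where
  "seq_cont M Obj Mor \<longleftrightarrow>
     (\<forall>uu u. (\<forall>k. uu k \<in> M) \<and> (\<forall>k. leM (uu k) (uu (Suc k))) \<and> uu \<longlonglongrightarrow> u \<longrightarrow>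
        bij_betw (\<lambda>x k. Mor (uu k) u x) (Obj u) (invlim Obj Mor uu))"

end

theory Submission
  imports Defs "HOL-Library.Function_Algebras"
begin

text \<open>Pointwise finite-dimensionality of the middle functor is linear algebra on the exact
  sequence F2(u) \<rightarrow> F3(u) \<rightarrow> F4(u). For sequential continuity, fix an increasing sequence
  u_k \<rightarrow> u and compare the row of spaces F_i(u) with the row of inverse limits lim_k F_i(u_k)
  through the restriction maps. By the five lemma it suffices that the row of inverse limits is
  exact at lim F2 and lim F3. This is the Mittag-Leffler argument: in a tower of
  finite-dimensional spaces the images of a tower of nonempty cosets stabilize by a dimension
  count, and along the stable images a compatible family of preimages can be chosen step by
  step. The strip enters only through being closed and through the limit bounding the sequence.\<close>

lemma lin_on_add: "lin_on s1 s2 S f \<Longrightarrow> x \<in> S \<Longrightarrow> y \<in> S \<Longrightarrow> f (x + y) = f x + f y"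
  by (simp add: lin_on_def)

lemma lin_on_scale: "lin_on s1 s2 S f \<Longrightarrow> x \<in> S \<Longrightarrow> f (s1 c x) = s2 c (f x)"
  by (simp add: lin_on_def)

lemma lin_on_zero: "lin_on s1 s2 S f \<Longrightarrow> 0 \<in> S \<Longrightarrow> f 0 = 0"
  using lin_on_add[of s1 s2 S f 0 0] by simp

lemma lin_on_diff:
  assumes "module s1" "module.subspace s1 S" "lin_on s1 s2 S f" "x \<in> S" "y \<in> S"
  shows "f (x - y) = f x - f y"
proof -
  have "x - y \<in> S" using module.subspace_diff assms by blast
  then have "f (x - y + y) = f (x - y) + f y" using lin_on_add assms(3,5) by blast
  then show ?thesis by (simp add: algebra_simps)
qed

lemma subspace_image_lin_on:
  assumes "module s1" "module s2" "module.subspace s1 S" "lin_on s1 s2 S f"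
    "module.subspace s1 T" "T \<subseteq> S"
  shows "module.subspace s2 (f ` T)"
proof -
  interpret M1: module s1 by fact
  interpret M2: module s2 by fact
  have "0 \<in> f ` T"
    using lin_on_zero[OF assms(4)] M1.subspace_0[OF assms(3)] M1.subspace_0[OF assms(5)]
    by (metis image_eqI)
  moreover have "x + y \<in> f ` T" if xy: "x \<in> f ` T" "y \<in> f ` T" for x y
  proof -
    obtain x' y' where "x' \<in> T" "y' \<in> T" "x = f x'" "y = f y'" using xy by blast
    then show ?thesis
      using lin_on_add[OF assms(4)] M1.subspace_add[OF assms(5)] assms(6)
      by (metis image_eqI subsetD)
  qed
  moreover have "s2 c x \<in> f ` T" if x: "x \<in> f ` T" for c x
  proof -
    obtain x' where "x' \<in> T" "x = f x'" using x by blast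
    then show ?thesis
      using lin_on_scale[OF assms(4)] M1.subspace_scale[OF assms(5)] assms(6)
      by (metis image_eqI subsetD)
  qed
  ultimately show ?thesis unfolding M2.subspace_def by blast
qed

lemma lin_on_image_span:
  assumes "module s1" "module s2" "module.subspace s1 S" "lin_on s1 s2 S f" "X \<subseteq> S"
  shows "f ` module.span s1 X = module.span s2 (f ` X)"
proof
  interpret M1: module s1 by fact
  interpret M2: module s2 by fact
  have span_S: "M1.span X \<subseteq> S" using M1.span_minimal assms(3,5) by blast
  have "M2.subspace (f ` M1.span X)"
    using subspace_image_lin_on[OF assms(1-4) M1.subspace_span span_S] .
  then show "M2.span (f ` X) \<subseteq> f ` M1.span X"
    using M2.span_minimal M1.span_superset by (metis image_mono)
  let ?P = "{x \<in> S. f x \<in> M2.span (f ` X)}"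
  have "M1.subspace ?P"
    unfolding M1.subspace_def
  proof (intro conjI ballI allI)
    show "0 \<in> ?P"
      using M1.subspace_0[OF assms(3)] lin_on_zero[OF assms(4)] M2.span_zero by simp
    show "x + y \<in> ?P" if "x \<in> ?P" "y \<in> ?P" for x y
      using that M1.subspace_add[OF assms(3)] lin_on_add[OF assms(4)] M2.span_add by simp
    show "s1 c x \<in> ?P" if "x \<in> ?P" for c x
      using that M1.subspace_scale[OF assms(3)] lin_on_scale[OF assms(4)] M2.span_scale by simp
  qed
  moreover have "X \<subseteq> ?P" using assms(5) M2.span_base by blast
  ultimately show "f ` M1.span X \<subseteq> M2.span (f ` X)" using M1.span_minimal by blast
qed

context vector_space begin

lemma finite_spanning_subset:
  assumes "S \<subseteq> span B" "finite B"
  obtains C where "finite C" "C \<subseteq> S" "S \<subseteq> span C"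
proof -
  obtain C where C: "C \<subseteq> S" "independent C" "S \<subseteq> span C" "card C = dim S"
    by (rule basis_exists)
  have "finite C" using independent_span_bound[OF assms(2) C(2)] C(1) assms(1) by blast
  then show thesis using that C(1,3) by blast
qed

lemma independent_card_le_dim_of_finite_span:
  assumes "independent I" "I \<subseteq> T" "T \<subseteq> span B" "finite B"
  shows "finite I" "card I \<le> dim T"
proof -
  obtain C where C: "C \<subseteq> T" "independent C" "T \<subseteq> span C" "card C = dim T"
    by (rule basis_exists)
  have "finite C" using independent_span_bound[OF assms(4) C(2)] C(1) assms(3) by blast
  moreover have "I \<subseteq> span C" using assms(2) C(3) by blast
  ultimately have "finite I \<and> card I \<le> card C" by (rule independent_span_bound[OF _ assms(1)])
  then show "finite I" "card I \<le> dim T" using C(4) by simp_all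
qed

lemma subspace_eq_if_dim_le:
  assumes "subspace S" "S \<subseteq> T" "T \<subseteq> span B" "finite B" "dim T \<le> dim S"
  shows "S = T"
proof (rule ccontr)
  assume "S \<noteq> T"
  then obtain x where x: "x \<in> T" "x \<notin> S" using assms(2) by blast
  obtain C where C: "C \<subseteq> S" "independent C" "S \<subseteq> span C" "card C = dim S"
    by (rule basis_exists)
  have "span C = S" using span_subspace C assms(1) by blast
  then have indep: "independent (insert x C)" using independent_insertI x(2) C(2) by blast
  have "insert x C \<subseteq> T" using x(1) C(1) assms(2) by blast
  note bound = independent_card_le_dim_of_finite_span[OF indep this assms(3,4)]
  have "x \<notin> C" using x(2) C(1) by blast
  then show False using bound C(4) assms(5) by simp
qed

lemma decreasing_subspaces_stabilize:
  assumes "\<And>l. subspace (T l)" "\<And>l. T (Suc l) \<subseteq> T l" "T 0 \<subseteq> span B" "finite B"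
  shows "\<exists>N. \<forall>l\<ge>N. T l = T N"
proof -
  have antimono: "T l' \<subseteq> T l" if "l \<le> l'" for l l'
    using that assms(2) by (induction rule: dec_induct) blast+
  obtain N where N: "\<And>l. dim (T N) \<le> dim (T l)"
    using ex_has_least_nat[of "\<lambda>_. True" 0 "\<lambda>l. dim (T l)"] by blast
  have "T l = T N" if "l \<ge> N" for l
    using subspace_eq_if_dim_le[OF assms(1) antimono[OF that] _ assms(4) N]
      antimono[of 0 N] assms(3) by blast
  then show ?thesis by blast
qed

end

lemma finite_span_exact_middle:
  assumes "module s2" "module s3" "vector_space s4"
    and V2: "module.subspace s2 V2" and V3: "module.subspace s3 V3"
    and f: "lin_on s2 s3 V2 f" and g: "lin_on s3 s4 V3 g"
    and exact: "f ` V2 = {y \<in> V3. g y = 0}"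
    and B2: "finite B2" "B2 \<subseteq> V2" "module.span s2 B2 = V2"
    and B4: "finite B4" "g ` V3 \<subseteq> module.span s4 B4"
  shows "\<exists>B. finite B \<and> B \<subseteq> V3 \<and> module.span s3 B = V3"
proof -
  interpret M2: module s2 by fact
  interpret M3: module s3 by fact
  interpret V4: vector_space s4 by fact
  obtain C4 where C4: "finite C4" "C4 \<subseteq> g ` V3" "g ` V3 \<subseteq> V4.span C4"
    by (rule V4.finite_spanning_subset[OF B4(2,1)])
  obtain C where C: "C \<subseteq> V3" "finite C" "C4 = g ` C"
    using finite_subset_image[OF C4(1,2)] by blast
  define G where "G = f ` B2 \<union> C"
  have f_V2: "f ` V2 \<subseteq> V3" using exact by blast
  have G: "finite G" "G \<subseteq> V3" unfolding G_def using B2 C f_V2 by auto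
  have "V3 \<subseteq> M3.span G"
  proof
    fix x assume x: "x \<in> V3"
    have "g x \<in> V4.span (g ` C)" using x C4(3) C(3) by blast
    also have "\<dots> = g ` M3.span C"
      by (rule lin_on_image_span[OF assms(2) V4.module_axioms V3 g C(1), symmetric])
    finally obtain y where y: "y \<in> M3.span C" "g x = g y" by blast
    have y_V3: "y \<in> V3" using y(1) M3.span_minimal[OF C(1) V3] by blast
    have "g (x - y) = 0" using lin_on_diff[OF assms(2) V3 g x y_V3] y(2) by simp
    then have "x - y \<in> f ` V2" using exact M3.subspace_diff[OF V3 x y_V3] by simp
    also have "\<dots> = M3.span (f ` B2)"
      using lin_on_image_span[OF assms(1,2) V2 f B2(2)] B2(3) by simp
    finally have "x - y \<in> M3.span G" using M3.span_mono[of "f ` B2" G] unfolding G_def by blast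
    moreover have "y \<in> M3.span G" using y(1) M3.span_mono[of C G] unfolding G_def by blast
    ultimately have "(x - y) + y \<in> M3.span G" by (rule M3.span_add)
    then show "x \<in> M3.span G" by simp
  qed
  then have "M3.span G = V3" using M3.span_minimal[OF G(2) V3] by blast
  then show ?thesis using G by blast
qed

lemma four_lemma_kernel:
  fixes f1 :: "'a1 \<Rightarrow> 'a2::ab_group_add" and f2 :: "'a2 \<Rightarrow> 'a3::ab_group_add"
    and f3 :: "'a3 \<Rightarrow> 'a4::ab_group_add" and g1 :: "'b1 \<Rightarrow> 'b2::ab_group_add"
    and g2 :: "'b2 \<Rightarrow> 'b3::ab_group_add" and g3 :: "'b3 \<Rightarrow> 'b4::ab_group_add"
  assumes exact_A3: "f2 ` A2 = {x \<in> A3. f3 x = 0}"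
    and complex_A2: "\<And>x. x \<in> A1 \<Longrightarrow> f2 (f1 x) = 0"
    and exact_B2: "g1 ` B1 = {y \<in> B2. g2 y = 0}"
    and square1: "\<And>x. x \<in> A1 \<Longrightarrow> h2 (f1 x) = g1 (h1 x)"
    and square2: "\<And>x. x \<in> A2 \<Longrightarrow> h3 (f2 x) = g2 (h2 x)"
    and square3: "\<And>x. x \<in> A3 \<Longrightarrow> h4 (f3 x) = g3 (h3 x)"
    and f1: "f1 ` A1 \<subseteq> A2" and f3: "f3 ` A3 \<subseteq> A4" and h2: "h2 ` A2 \<subseteq> B2"
    and surj_h1: "B1 \<subseteq> h1 ` A1" and inj_h2: "inj_on h2 A2"
    and kernel_h4: "\<And>x. x \<in> A4 \<Longrightarrow> h4 x = 0 \<Longrightarrow> x = 0" and "g3 0 = 0"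
    and x: "x \<in> A3" "h3 x = 0"
  shows "x = 0"
proof -
  have "h4 (f3 x) = 0" using square3[OF x(1)] x(2) \<open>g3 0 = 0\<close> by simp
  then have "f3 x = 0" using kernel_h4 f3 x(1) by blast
  then obtain y where y: "y \<in> A2" "x = f2 y" using exact_A3 x(1) by blast
  have "g2 (h2 y) = 0" using square2[OF y(1)] x(2) y(2) by simp
  then have "h2 y \<in> g1 ` B1" using exact_B2 h2 y(1) by blast
  then obtain z where z: "z \<in> A1" "h2 y = g1 (h1 z)" using surj_h1 by blast
  then have "y = f1 z" using inj_h2 square1[OF z(1)] f1 y(1) by (metis image_subset_iff inj_onD)
  then show ?thesis using y(2) complex_A2[OF z(1)] by simp
qed

lemma four_lemma_surj:
  fixes f2 :: "'a2 \<Rightarrow> 'a3::ab_group_add" and f3 :: "'a3 \<Rightarrow> 'a4::ab_group_add"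
    and f4 :: "'a4 \<Rightarrow> 'a5::ab_group_add" and g2 :: "'b2 \<Rightarrow> 'b3::ab_group_add"
    and g3 :: "'b3 \<Rightarrow> 'b4::ab_group_add" and g4 :: "'b4 \<Rightarrow> 'b5::ab_group_add"
    and h3 :: "'a3 \<Rightarrow> 'b3"
  assumes exact_A4: "f3 ` A3 = {x \<in> A4. f4 x = 0}"
    and exact_B3: "g2 ` B2 = {y \<in> B3. g3 y = 0}"
    and complex_B3: "\<And>y. y \<in> B3 \<Longrightarrow> g4 (g3 y) = 0"
    and square2: "\<And>x. x \<in> A2 \<Longrightarrow> h3 (f2 x) = g2 (h2 x)"
    and square3: "\<And>x. x \<in> A3 \<Longrightarrow> h4 (f3 x) = g3 (h3 x)"
    and square4: "\<And>x. x \<in> A4 \<Longrightarrow> h5 (f4 x) = g4 (h4 x)"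
    and f2: "f2 ` A2 \<subseteq> A3" and f4: "f4 ` A4 \<subseteq> A5" and h3: "h3 ` A3 \<subseteq> B3" and g3: "g3 ` B3 \<subseteq> B4"
    and surj_h2: "B2 \<subseteq> h2 ` A2" and surj_h4: "B4 \<subseteq> h4 ` A4"
    and kernel_h5: "\<And>x. x \<in> A5 \<Longrightarrow> h5 x = 0 \<Longrightarrow> x = 0"
    and add_A3: "\<And>x x'. x \<in> A3 \<Longrightarrow> x' \<in> A3 \<Longrightarrow> x + x' \<in> A3 \<and> h3 (x + x') = h3 x + h3 x'"
    and diff_B3: "\<And>y y'. y \<in> B3 \<Longrightarrow> y' \<in> B3 \<Longrightarrow> y - y' \<in> B3 \<and> g3 (y - y') = g3 y - g3 y'"
    and y: "y \<in> B3"
  shows "y \<in> h3 ` A3"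
proof -
  obtain a where a: "a \<in> A4" "g3 y = h4 a" using g3 surj_h4 y by blast
  have "h5 (f4 a) = 0" using square4[OF a(1)] a(2) complex_B3[OF y] by simp
  then have "f4 a = 0" using kernel_h5 f4 a(1) by blast
  then obtain x' where x': "x' \<in> A3" "a = f3 x'" using exact_A4 a(1) by blast
  have hx': "h3 x' \<in> B3" using h3 x'(1) by blast
  have "g3 (y - h3 x') = 0" using diff_B3[OF y hx'] a(2) x'(2) square3[OF x'(1)] by simp
  then have "y - h3 x' \<in> g2 ` B2" using exact_B3 diff_B3[OF y hx'] by blast
  then obtain p where p: "p \<in> A2" "y - h3 x' = g2 (h2 p)" using surj_h2 by blast
  have fp: "f2 p \<in> A3" using f2 p(1) by blast
  have "y = h3 (f2 p) + h3 x'" using p(2) square2[OF p(1)] by (simp add: algebra_simps)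
  also have "\<dots> = h3 (f2 p + x')" using add_A3[OF fp x'(1)] by simp
  finally show ?thesis using add_A3[OF fp x'(1)] by blast
qed

locale fd_tower = vector_space scale
  for scale :: "'a::field \<Rightarrow> 'b::ab_group_add \<Rightarrow> 'b" +
  fixes A :: "nat \<Rightarrow> 'b set" and m :: "nat \<Rightarrow> nat \<Rightarrow> 'b \<Rightarrow> 'b"
  assumes subspace_A: "subspace (A k)"
    and finite_span_A: "\<exists>B. finite B \<and> A k \<subseteq> span B"
    and m_in: "k \<le> l \<Longrightarrow> x \<in> A l \<Longrightarrow> m k l x \<in> A k"
    and m_lin: "k \<le> l \<Longrightarrow> lin_on scale scale (A l) (m k l)"
    and m_id: "x \<in> A k \<Longrightarrow> m k k x = x"
    and m_comp: "k \<le> l \<Longrightarrow> l \<le> n \<Longrightarrow> x \<in> A n \<Longrightarrow> m k l (m l n x) = m k n x"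
begin

definition subtower :: "(nat \<Rightarrow> 'b set) \<Rightarrow> bool" where
  "subtower X \<longleftrightarrow> (\<forall>l. X l \<subseteq> A l) \<and> (\<forall>k l x. k \<le> l \<longrightarrow> x \<in> X l \<longrightarrow> m k l x \<in> X k)"

lemma subtower_subset: "subtower X \<Longrightarrow> x \<in> X l \<Longrightarrow> x \<in> A l"
  unfolding subtower_def by blast

lemma subtower_m_in: "subtower X \<Longrightarrow> k \<le> l \<Longrightarrow> x \<in> X l \<Longrightarrow> m k l x \<in> X k"
  unfolding subtower_def by blast

lemma subtower_image_antimono:
  assumes "subtower X" "k \<le> l" "l \<le> l'"
  shows "m k l' ` X l' \<subseteq> m k l ` X l"
proof
  fix v assume "v \<in> m k l' ` X l'"
  then obtain x where x: "x \<in> X l'" "v = m k l' x" by blast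
  then have "v = m k l (m l l' x)"
    using m_comp[OF assms(2,3)] subtower_subset[OF assms(1)] by simp
  moreover have "m l l' x \<in> X l" using subtower_m_in[OF assms(1,3) x(1)] .
  ultimately show "v \<in> m k l ` X l" by blast
qed

lemma subtower_subspace_images_stabilize:
  assumes "subtower X" "\<And>l. subspace (X l)"
  shows "\<exists>N\<ge>k. \<forall>l\<ge>N. m k l ` X l = m k N ` X N"
proof -
  define T where "T j = m k (k + j) ` X (k + j)" for j
  have T_subspace: "subspace (T j)" for j
  proof -
    have "X (k + j) \<subseteq> A (k + j)" using subtower_subset[OF assms(1)] by blast
    then show ?thesis
      unfolding T_def
      by (rule subspace_image_lin_on[OF module_axioms module_axioms subspace_A m_lin[OF le_add1] assms(2)])
  qed
  have T_dec: "T (Suc j) \<subseteq> T j" for j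
    unfolding T_def using subtower_image_antimono[OF assms(1)] by simp
  obtain B where B: "finite B" "A k \<subseteq> span B" using finite_span_A by blast
  have T_0: "T 0 \<subseteq> span B"
    unfolding T_def using subtower_subset[OF assms(1)] m_in[of k k] B(2) by auto
  obtain N where N: "\<And>j. j \<ge> N \<Longrightarrow> T j = T N"
    using decreasing_subspaces_stabilize[of T, OF T_subspace T_dec T_0 B(1)] by blast
  have "m k l ` X l = m k (k + N) ` X (k + N)" if "l \<ge> k + N" for l
  proof -
    have "T (l - k) = T N" by (rule N) (use that in simp)
    moreover have "k + (l - k) = l" using that by simp
    ultimately show ?thesis unfolding T_def by metis
  qed
  then show ?thesis by (intro exI[of _ "k + N"] conjI allI impI le_add1)
qed

text \<open>The images of the cosets P are cosets of the images of K, so once the latter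
  stabilize, an image of P at a later stage contains the earlier one.\<close>

lemma subtower_coset_images_stabilize:
  assumes K: "subtower K" "\<And>l. subspace (K l)"
    and P: "subtower P" "\<And>l. P l \<noteq> {}"
    and P_diff: "\<And>l p q. p \<in> P l \<Longrightarrow> q \<in> P l \<Longrightarrow> p - q \<in> K l"
    and P_add: "\<And>l p z. p \<in> P l \<Longrightarrow> z \<in> K l \<Longrightarrow> p + z \<in> P l"
  shows "\<exists>N\<ge>k. \<forall>l\<ge>N. m k l ` P l = m k N ` P N"
proof -
  obtain N where N: "N \<ge> k" "\<And>l. l \<ge> N \<Longrightarrow> m k l ` K l = m k N ` K N"
    using subtower_subspace_images_stabilize[OF K, of k] by blast
  have "m k N ` P N \<subseteq> m k l ` P l" if l: "l \<ge> N" for l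
  proof
    fix x assume "x \<in> m k N ` P N"
    then obtain p where p: "p \<in> P N" "x = m k N p" by blast
    obtain p' where p': "p' \<in> P l" using P(2) by blast
    have "m k l p' \<in> m k N ` P N" using subtower_image_antimono[OF P(1) N(1) l] p' by blast
    then obtain q where q: "q \<in> P N" "m k N q = m k l p'" by (metis imageE)
    have "x - m k l p' = m k N (p - q)"
      using lin_on_diff[OF module_axioms subspace_A m_lin[OF N(1)]] subtower_subset[OF P(1)] p q
      by simp
    also have "\<dots> \<in> m k l ` K l" using P_diff[OF p(1) q(1)] N(2)[OF l] by blast
    finally obtain z where z: "z \<in> K l" "x - m k l p' = m k l z" by blast
    have "x = m k l p' + m k l z" using z(2) by (simp add: algebra_simps)
    also have "\<dots> = m k l (p' + z)"
      using lin_on_add[OF m_lin] N(1) l p' z(1) subtower_subset[OF P(1)] subtower_subset[OF K(1)]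
      by simp
    finally show "x \<in> m k l ` P l" using P_add[OF p' z(1)] by blast
  qed
  then have "m k l ` P l = m k N ` P N" if "l \<ge> N" for l
    using that subtower_image_antimono[OF P(1) N(1)] by blast
  then show ?thesis using N(1) by blast
qed

lemma compatible_if_compatible_Suc:
  assumes "\<And>k. x k \<in> A k" "\<And>k. m k (Suc k) (x (Suc k)) = x k" "k \<le> l"
  shows "m k l (x l) = x k"
  using assms(3)
proof (induction rule: dec_induct)
  case base
  then show ?case using m_id assms(1) by blast
next
  case (step n)
  have "m k (Suc n) (x (Suc n)) = m k n (m n (Suc n) (x (Suc n)))"
    using m_comp[of k n "Suc n"] step(1) assms(1) by simp
  then show ?case using assms(2) step.IH by simp
qed

text \<open>Mittag-Leffler: the stable images form a tower with surjective transition maps,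
  along which a compatible family is chosen by dependent choice.\<close>

lemma coset_subtower_has_compatible_family:
  assumes K: "subtower K" "\<And>l. subspace (K l)"
    and P: "subtower P" "\<And>l. P l \<noteq> {}"
    and P_diff: "\<And>l p q. p \<in> P l \<Longrightarrow> q \<in> P l \<Longrightarrow> p - q \<in> K l"
    and P_add: "\<And>l p z. p \<in> P l \<Longrightarrow> z \<in> K l \<Longrightarrow> p + z \<in> P l"
  shows "\<exists>x. (\<forall>k. x k \<in> P k) \<and> (\<forall>k l. k \<le> l \<longrightarrow> m k l (x l) = x k)"
proof -
  have "\<forall>k. \<exists>N. N \<ge> k \<and> (\<forall>l\<ge>N. m k l ` P l = m k N ` P N)"
    using subtower_coset_images_stabilize[OF assms] by blast
  from choice[OF this] obtain N where
    N': "\<forall>k. N k \<ge> k \<and> (\<forall>l\<ge>N k. m k l ` P l = m k (N k) ` P (N k))"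
    by blast
  have N: "N k \<ge> k" "l \<ge> N k \<Longrightarrow> m k l ` P l = m k (N k) ` P (N k)" for k l
    using N' by blast+
  define S where "S k = m k (N k) ` P (N k)" for k
  have S_P: "S k \<subseteq> P k" for k
    unfolding S_def using subtower_m_in[OF P(1) N(1)] by blast
  have S_lift: "\<exists>x'. x' \<in> S (Suc k) \<and> m k (Suc k) x' = x" if x: "x \<in> S k" for k x
  proof -
    define L where "L = max (N k) (N (Suc k))"
    have L: "N k \<le> L" "N (Suc k) \<le> L" "k \<le> Suc k" "Suc k \<le> L"
      using N(1)[of "Suc k"] unfolding L_def by auto
    have "x \<in> m k L ` P L" using x N(2)[OF L(1)] unfolding S_def by simp
    then obtain p where p: "p \<in> P L" "x = m k L p" by blast
    have "m (Suc k) L p \<in> m (Suc k) L ` P L" using p(1) by blast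
    then have "m (Suc k) L p \<in> S (Suc k)" using N(2)[OF L(2)] unfolding S_def by simp
    moreover have "m k (Suc k) (m (Suc k) L p) = x"
      using m_comp[OF L(3,4)] subtower_subset[OF P(1) p(1)] p(2) by simp
    ultimately show ?thesis by blast
  qed
  have "\<exists>x. x \<in> S 0" using P(2) unfolding S_def by blast
  from dependent_nat_choice[of "\<lambda>k x. x \<in> S k" "\<lambda>k x x'. m k (Suc k) x' = x", OF this S_lift]
  obtain x where x: "\<And>k. x k \<in> S k" "\<And>k. m k (Suc k) (x (Suc k)) = x k"
    by blast
  have x_P: "x k \<in> P k" for k using x(1) S_P by blast
  have "m k l (x l) = x k" if "k \<le> l" for k l
    by (rule compatible_if_compatible_Suc[OF subtower_subset[OF P(1) x_P] x(2) that])
  then show ?thesis using x_P by blast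
qed

lemma lift_compatible_family:
  assumes "module s'" and f_lin: "\<And>l. lin_on scale s' (A l) (f l)"
    and fibres: "\<And>k l x. k \<le> l \<Longrightarrow> x \<in> A l \<Longrightarrow> f l x = y l \<Longrightarrow> f k (m k l x) = y k"
    and y: "\<And>l. y l \<in> f l ` A l"
  shows "\<exists>x. (\<forall>k. x k \<in> A k \<and> f k (x k) = y k) \<and> (\<forall>k l. k \<le> l \<longrightarrow> m k l (x l) = x k)"
proof -
  interpret M': module s' by fact
  define K where "K l = {x \<in> A l. f l x = 0}" for l
  define P where "P l = {x \<in> A l. f l x = y l}" for l
  have K_subspace: "subspace (K l)" for l
    unfolding subspace_def
  proof (intro conjI ballI allI)
    show "0 \<in> K l"
      using lin_on_zero[OF f_lin subspace_0[OF subspace_A]] subspace_0[OF subspace_A]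
      unfolding K_def by simp
    show "x + x' \<in> K l" if "x \<in> K l" "x' \<in> K l" for x x'
      using that lin_on_add[OF f_lin] subspace_add[OF subspace_A] unfolding K_def by simp
    show "scale c x \<in> K l" if "x \<in> K l" for c x
      using that lin_on_scale[OF f_lin] subspace_scale[OF subspace_A] unfolding K_def by simp
  qed
  have P: "subtower P" unfolding subtower_def P_def using fibres m_in by blast
  have P_diff: "p - q \<in> K l" if "p \<in> P l" "q \<in> P l" for l p q
    using that lin_on_diff[OF module_axioms subspace_A f_lin] subspace_diff[OF subspace_A]
    unfolding P_def K_def by simp
  have P_add: "p + z \<in> P l" if "p \<in> P l" "z \<in> K l" for l p z
    using that lin_on_add[OF f_lin] subspace_add[OF subspace_A] unfolding P_def K_def by simp
  have P_nonempty: "P l \<noteq> {}" for l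
  proof -
    obtain x where "x \<in> A l" "y l = f l x" using y[of l] by (rule imageE)
    then show ?thesis unfolding P_def by auto
  qed
  have "m k l z \<in> K k" if kl: "k \<le> l" and z: "z \<in> K l" for k l z
    \<comment> \<open>the kernels are differences of fibres, and the fibres form a subtower\<close>
  proof -
    obtain p where p: "p \<in> P l" using P_nonempty by blast
    have "m k l z = m k l (p + z) - m k l p"
      using lin_on_add[OF m_lin[OF kl]] subtower_subset[OF P p] z unfolding K_def by simp
    also have "\<dots> \<in> K k"
      using P_diff subtower_m_in[OF P kl] P_add[OF p z] p by blast
    finally show ?thesis .
  qed
  then have K: "subtower K" unfolding subtower_def K_def by blast
  obtain x where "\<And>k. x k \<in> P k" "\<And>k l. k \<le> l \<Longrightarrow> m k l (x l) = x k"
    using coset_subtower_has_compatible_family[OF K K_subspace P P_nonempty P_diff P_add] by blast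
  then show ?thesis unfolding P_def by blast
qed

end

lemma is_functor_vector_space: "is_functor M s Ob Mor \<Longrightarrow> vector_space s"
  by (simp add: is_functor_def)

lemma is_functor_module: "is_functor M s Ob Mor \<Longrightarrow> module s"
  by (simp add: is_functor_def module_iff_vector_space)

lemma is_functor_subspace: "is_functor M s Ob Mor \<Longrightarrow> u \<in> M \<Longrightarrow> module.subspace s (Ob u)"
  by (simp add: is_functor_def)

lemma is_functor_map_in:
  "is_functor M s Ob Mor \<Longrightarrow> u \<in> M \<Longrightarrow> w \<in> M \<Longrightarrow> leM u w \<Longrightarrow> x \<in> Ob w \<Longrightarrow> Mor u w x \<in> Ob u"
  unfolding is_functor_def by blast

lemma is_functor_lin:
  "is_functor M s Ob Mor \<Longrightarrow> u \<in> M \<Longrightarrow> w \<in> M \<Longrightarrow> leM u w \<Longrightarrow> lin_on s s (Ob w) (Mor u w)"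
  unfolding is_functor_def by blast

lemma is_functor_id: "is_functor M s Ob Mor \<Longrightarrow> u \<in> M \<Longrightarrow> x \<in> Ob u \<Longrightarrow> Mor u u x = x"
  unfolding is_functor_def by blast

lemma is_functor_comp:
  "is_functor M s Ob Mor \<Longrightarrow> u \<in> M \<Longrightarrow> v \<in> M \<Longrightarrow> w \<in> M \<Longrightarrow> leM u v \<Longrightarrow> leM v w
   \<Longrightarrow> x \<in> Ob w \<Longrightarrow> Mor u v (Mor v w x) = Mor u w x"
  unfolding is_functor_def by blast

lemma is_functor_zero_in: "is_functor M s Ob Mor \<Longrightarrow> u \<in> M \<Longrightarrow> 0 \<in> Ob u"
  using is_functor_subspace is_functor_module module.subspace_0 by blast

lemma is_functor_add_in:
  "is_functor M s Ob Mor \<Longrightarrow> u \<in> M \<Longrightarrow> x \<in> Ob u \<Longrightarrow> y \<in> Ob u \<Longrightarrow> x + y \<in> Ob u"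
  using is_functor_subspace is_functor_module module.subspace_add by blast

lemma is_functor_diff_in:
  "is_functor M s Ob Mor \<Longrightarrow> u \<in> M \<Longrightarrow> x \<in> Ob u \<Longrightarrow> y \<in> Ob u \<Longrightarrow> x - y \<in> Ob u"
  using is_functor_subspace is_functor_module module.subspace_diff by blast

lemma is_functor_map_zero:
  "is_functor M s Ob Mor \<Longrightarrow> u \<in> M \<Longrightarrow> w \<in> M \<Longrightarrow> leM u w \<Longrightarrow> Mor u w 0 = 0"
  using lin_on_zero is_functor_lin is_functor_zero_in by blast

lemma is_functor_map_add:
  "is_functor M s Ob Mor \<Longrightarrow> u \<in> M \<Longrightarrow> w \<in> M \<Longrightarrow> leM u w \<Longrightarrow> x \<in> Ob w \<Longrightarrow> y \<in> Ob w
   \<Longrightarrow> Mor u w (x + y) = Mor u w x + Mor u w y"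
  by (rule lin_on_add[OF is_functor_lin])

lemma is_functor_map_diff:
  "is_functor M s Ob Mor \<Longrightarrow> u \<in> M \<Longrightarrow> w \<in> M \<Longrightarrow> leM u w \<Longrightarrow> x \<in> Ob w \<Longrightarrow> y \<in> Ob w
   \<Longrightarrow> Mor u w (x - y) = Mor u w x - Mor u w y"
  by (rule lin_on_diff[OF is_functor_module is_functor_subspace is_functor_lin])

lemma is_nat_trans_in:
  "is_nat_trans M s1 O1 M1 s2 O2 M2 f \<Longrightarrow> u \<in> M \<Longrightarrow> x \<in> O1 u \<Longrightarrow> f u x \<in> O2 u"
  unfolding is_nat_trans_def by blast

lemma is_nat_trans_lin:
  "is_nat_trans M s1 O1 M1 s2 O2 M2 f \<Longrightarrow> u \<in> M \<Longrightarrow> lin_on s1 s2 (O1 u) (f u)"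
  unfolding is_nat_trans_def by blast

lemma is_nat_trans_natural:
  "is_nat_trans M s1 O1 M1 s2 O2 M2 f \<Longrightarrow> u \<in> M \<Longrightarrow> w \<in> M \<Longrightarrow> leM u w \<Longrightarrow> x \<in> O1 w
   \<Longrightarrow> f u (M1 u w x) = M2 u w (f w x)"
  unfolding is_nat_trans_def by blast

lemma is_nat_trans_zero:
  "is_functor M s1 O1 M1 \<Longrightarrow> is_nat_trans M s1 O1 M1 s2 O2 M2 f \<Longrightarrow> u \<in> M \<Longrightarrow> f u 0 = 0"
  using lin_on_zero is_nat_trans_lin is_functor_zero_in by blast

lemma is_nat_trans_diff:
  "is_functor M s1 O1 M1 \<Longrightarrow> is_nat_trans M s1 O1 M1 s2 O2 M2 f \<Longrightarrow> u \<in> M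
   \<Longrightarrow> x \<in> O1 u \<Longrightarrow> y \<in> O1 u \<Longrightarrow> f u (x - y) = f u x - f u y"
  by (rule lin_on_diff[OF is_functor_module is_functor_subspace is_nat_trans_lin])

lemma exact_atD:
  "exact_at M O1 f O2 g \<Longrightarrow> u \<in> M \<Longrightarrow> y \<in> O2 u \<Longrightarrow> g u y = 0 \<Longrightarrow> \<exists>x\<in>O1 u. y = f u x"
  unfolding exact_at_def by blast

lemma exact_at_comp_zero:
  "exact_at M O1 f O2 g \<Longrightarrow> u \<in> M \<Longrightarrow> x \<in> O1 u \<Longrightarrow> g u (f u x) = 0"
  unfolding exact_at_def by blast

lemma pfd_exact_middle:
  assumes F2: "is_functor M s2 O2 M2" and F3: "is_functor M s3 O3 M3"
    and F4: "is_functor M s4 O4 M4"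
    and N2: "is_nat_trans M s2 O2 M2 s3 O3 M3 f2" and N3: "is_nat_trans M s3 O3 M3 s4 O4 M4 f3"
    and E3: "exact_at M O2 f2 O3 f3" and P2: "pfd M s2 O2" and P4: "pfd M s4 O4"
  shows "pfd M s3 O3"
  unfolding pfd_def
proof
  fix u assume u: "u \<in> M"
  obtain B2 where B2: "finite B2" "B2 \<subseteq> O2 u" "module.span s2 B2 = O2 u"
    using P2 u unfolding pfd_def by blast
  obtain B4 where B4: "finite B4" "module.span s4 B4 = O4 u"
    using P4 u unfolding pfd_def by blast
  have f3: "f3 u ` O3 u \<subseteq> module.span s4 B4" using is_nat_trans_in[OF N3 u] B4(2) by blast
  have exact: "f2 u ` O2 u = {y \<in> O3 u. f3 u y = 0}" using E3 u unfolding exact_at_def by blast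
  show "\<exists>B. finite B \<and> B \<subseteq> O3 u \<and> module.span s3 B = O3 u"
    by (rule finite_span_exact_middle[OF is_functor_module[OF F2] is_functor_module[OF F3]
        is_functor_vector_space[OF F4] is_functor_subspace[OF F2 u] is_functor_subspace[OF F3 u]
        is_nat_trans_lin[OF N2 u] is_nat_trans_lin[OF N3 u] exact B2 B4(1) f3])
qed

definition chain_in :: "(real \<times> real) set \<Rightarrow> (nat \<Rightarrow> real \<times> real) \<Rightarrow> bool" where
  "chain_in M uu \<longleftrightarrow> (\<forall>k. uu k \<in> M) \<and> (\<forall>k l. k \<le> l \<longrightarrow> leM (uu k) (uu l))"

lemma chain_in_mem: "chain_in M uu \<Longrightarrow> uu k \<in> M"
  unfolding chain_in_def by blast

lemma chain_in_le: "chain_in M uu \<Longrightarrow> k \<le> l \<Longrightarrow> leM (uu k) (uu l)"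
  unfolding chain_in_def by blast

lemma invlim_cone:
  assumes F: "is_functor M s Ob Mor" and uu: "chain_in M uu"
    and u: "u \<in> M" "\<And>k. leM (uu k) u" and x: "x \<in> Ob u"
  shows "(\<lambda>k. Mor (uu k) u x) \<in> invlim Ob Mor uu"
  unfolding invlim_def
  using is_functor_map_in[OF F chain_in_mem[OF uu] u(1) u(2) x]
    is_functor_comp[OF F chain_in_mem[OF uu] chain_in_mem[OF uu] u(1) chain_in_le[OF uu] u(2) x]
  by simp

lemma invlim_nat_trans:
  assumes N: "is_nat_trans M s1 O1 M1 s2 O2 M2 f" and uu: "chain_in M uu"
    and y: "y \<in> invlim O1 M1 uu"
  shows "(\<lambda>k. f (uu k) (y k)) \<in> invlim O2 M2 uu"
proof -
  have y: "\<And>k. y k \<in> O1 (uu k)" "\<And>k l. k \<le> l \<Longrightarrow> M1 (uu k) (uu l) (y l) = y k"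
    using y unfolding invlim_def by blast+
  have "M2 (uu k) (uu l) (f (uu l) (y l)) = f (uu k) (y k)" if "k \<le> l" for k l
    using is_nat_trans_natural[OF N chain_in_mem[OF uu] chain_in_mem[OF uu] chain_in_le[OF uu that] y(1)]
      y(2)[OF that] by simp
  then show ?thesis using is_nat_trans_in[OF N chain_in_mem[OF uu] y(1)] unfolding invlim_def by simp
qed

lemma invlim_lift:
  assumes F: "is_functor M s Ob Mor" and G: "is_functor M s' Ob' Mor'"
    and N: "is_nat_trans M s Ob Mor s' Ob' Mor' f" and P: "pfd M s Ob"
    and uu: "chain_in M uu" and y: "y \<in> invlim Ob' Mor' uu"
    and y_img: "\<And>k. y k \<in> f (uu k) ` Ob (uu k)"
  shows "\<exists>x\<in>invlim Ob Mor uu. \<forall>k. f (uu k) (x k) = y k"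
proof -
  note uM = chain_in_mem[OF uu] and le = chain_in_le[OF uu]
  interpret fd_tower s "\<lambda>k. Ob (uu k)" "\<lambda>k l. Mor (uu k) (uu l)"
  proof unfold_locales
    show "module.subspace s (Ob (uu k))" for k using is_functor_subspace[OF F uM] .
    show "\<exists>B. finite B \<and> Ob (uu k) \<subseteq> module.span s B" for k
      using P uM unfolding pfd_def by (metis order_refl)
  qed (use is_functor_vector_space[OF F] is_functor_map_in[OF F uM uM le] is_functor_lin[OF F uM uM le]
        is_functor_id[OF F uM] is_functor_comp[OF F uM uM uM le le]
        in \<open>simp_all add: vector_space_def\<close>)
  have y: "\<And>k. y k \<in> Ob' (uu k)" "\<And>k l. k \<le> l \<Longrightarrow> Mor' (uu k) (uu l) (y l) = y k"
    using y unfolding invlim_def by blast+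
  have "f (uu k) (Mor (uu k) (uu l) x) = y k"
    if "k \<le> l" "x \<in> Ob (uu l)" "f (uu l) x = y l" for k l x
    using is_nat_trans_natural[OF N uM uM le[OF that(1)] that(2)] that(3) y(2)[OF that(1)] by simp
  from lift_compatible_family[OF is_functor_module[OF G] is_nat_trans_lin[OF N uM] this y_img]
  show ?thesis unfolding invlim_def by blast
qed

lemma invlim_cone_natural:
  assumes N: "is_nat_trans M s1 O1 M1 s2 O2 M2 f" and uu: "chain_in M uu"
    and u: "u \<in> M" "\<And>k. leM (uu k) u" and x: "x \<in> O1 u"
  shows "(\<lambda>k. M2 (uu k) u (f u x)) = (\<lambda>k. f (uu k) (M1 (uu k) u x))"
  using is_nat_trans_natural[OF N chain_in_mem[OF uu] u(1) u(2) x] by simp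

lemma invlim_cone_add:
  assumes F: "is_functor M s Ob Mor" and uu: "chain_in M uu"
    and u: "u \<in> M" "\<And>k. leM (uu k) u" and x: "x \<in> Ob u" "y \<in> Ob u"
  shows "(\<lambda>k. Mor (uu k) u (x + y)) = (\<lambda>k. Mor (uu k) u x) + (\<lambda>k. Mor (uu k) u y)"
  using is_functor_map_add[OF F chain_in_mem[OF uu] u(1) u(2) x] by (simp add: fun_eq_iff)

lemma invlim_cone_diff:
  assumes F: "is_functor M s Ob Mor" and uu: "chain_in M uu"
    and u: "u \<in> M" "\<And>k. leM (uu k) u" and x: "x \<in> Ob u" "y \<in> Ob u"
  shows "(\<lambda>k. Mor (uu k) u (x - y)) = (\<lambda>k. Mor (uu k) u x) - (\<lambda>k. Mor (uu k) u y)"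
  using is_functor_map_diff[OF F chain_in_mem[OF uu] u(1) u(2) x] by (simp add: fun_eq_iff)

lemma invlim_diff:
  assumes F: "is_functor M s Ob Mor" and uu: "chain_in M uu"
    and y: "y \<in> invlim Ob Mor uu" "y' \<in> invlim Ob Mor uu"
  shows "y - y' \<in> invlim Ob Mor uu"
  using y is_functor_diff_in[OF F chain_in_mem[OF uu]]
    is_functor_map_diff[OF F chain_in_mem[OF uu] chain_in_mem[OF uu] chain_in_le[OF uu]]
  unfolding invlim_def by simp

lemma invlim_nat_trans_diff:
  assumes F: "is_functor M s1 O1 M1" and N: "is_nat_trans M s1 O1 M1 s2 O2 M2 f"
    and uu: "chain_in M uu" and y: "y \<in> invlim O1 M1 uu" "y' \<in> invlim O1 M1 uu"
  shows "(\<lambda>k. f (uu k) ((y - y') k)) = (\<lambda>k. f (uu k) (y k)) - (\<lambda>k. f (uu k) (y' k))"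
  using y is_nat_trans_diff[OF F N chain_in_mem[OF uu]] unfolding invlim_def by (simp add: fun_eq_iff)

lemma invlim_exact:
  assumes F1: "is_functor M s1 O1 M1" and F2: "is_functor M s2 O2 M2"
    and N1: "is_nat_trans M s1 O1 M1 s2 O2 M2 f1" and N2: "is_nat_trans M s2 O2 M2 s3 O3 M3 f2"
    and E: "exact_at M O1 f1 O2 f2" and P1: "pfd M s1 O1" and uu: "chain_in M uu"
  shows "(\<lambda>z k. f1 (uu k) (z k)) ` invlim O1 M1 uu = {y \<in> invlim O2 M2 uu. (\<lambda>k. f2 (uu k) (y k)) = 0}"
proof
  show "(\<lambda>z k. f1 (uu k) (z k)) ` invlim O1 M1 uu \<subseteq> {y \<in> invlim O2 M2 uu. (\<lambda>k. f2 (uu k) (y k)) = 0}"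
    using invlim_nat_trans[OF N1 uu] exact_at_comp_zero[OF E chain_in_mem[OF uu]]
    unfolding invlim_def by (auto simp: fun_eq_iff)
  show "{y \<in> invlim O2 M2 uu. (\<lambda>k. f2 (uu k) (y k)) = 0} \<subseteq> (\<lambda>z k. f1 (uu k) (z k)) ` invlim O1 M1 uu"
  proof clarify
    fix y assume y: "y \<in> invlim O2 M2 uu" "(\<lambda>k. f2 (uu k) (y k)) = 0"
    have "y k \<in> f1 (uu k) ` O1 (uu k)" for k
    proof -
      have "y k \<in> O2 (uu k)" using y(1) unfolding invlim_def by blast
      moreover have "f2 (uu k) (y k) = 0" using fun_cong[OF y(2), of k] by simp
      ultimately show ?thesis using exact_atD[OF E chain_in_mem[OF uu]] by blast
    qed
    then obtain x where x: "x \<in> invlim O1 M1 uu" "\<And>k. f1 (uu k) (x k) = y k"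
      using invlim_lift[OF F1 F2 N1 P1 uu y(1)] by blast
    have "y = (\<lambda>z k. f1 (uu k) (z k)) x" using x(2) by (simp add: fun_eq_iff)
    then show "y \<in> (\<lambda>z k. f1 (uu k) (z k)) ` invlim O1 M1 uu" using x(1) by (rule image_eqI)
  qed
qed

lemma restriction_inj_exact_middle:
  assumes F1: "is_functor M s1 O1 M1" and F2: "is_functor M s2 O2 M2"
    and F3: "is_functor M s3 O3 M3" and F4: "is_functor M s4 O4 M4"
    and N1: "is_nat_trans M s1 O1 M1 s2 O2 M2 f1" and N2: "is_nat_trans M s2 O2 M2 s3 O3 M3 f2"
    and N3: "is_nat_trans M s3 O3 M3 s4 O4 M4 f3"
    and E2: "exact_at M O1 f1 O2 f2" and E3: "exact_at M O2 f2 O3 f3" and P1: "pfd M s1 O1"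
    and uu: "chain_in M uu" and u: "u \<in> M" "\<And>k. leM (uu k) u"
    and surj1: "invlim O1 M1 uu \<subseteq> (\<lambda>x k. M1 (uu k) u x) ` O1 u"
    and inj2: "inj_on (\<lambda>x k. M2 (uu k) u x) (O2 u)"
    and inj4: "inj_on (\<lambda>x k. M4 (uu k) u x) (O4 u)"
  shows "inj_on (\<lambda>x k. M3 (uu k) u x) (O3 u)"
proof -
  have kernel4: "x = 0" if "x \<in> O4 u" "(\<lambda>k. M4 (uu k) u x) = 0" for x
    using inj_onD[OF inj4 _ that(1) is_functor_zero_in[OF F4 u(1)]] that(2)
      is_functor_map_zero[OF F4 chain_in_mem[OF uu] u] by (simp add: fun_eq_iff)
  have kernel3: "x = 0" if "x \<in> O3 u" "(\<lambda>k. M3 (uu k) u x) = 0" for x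
  proof (rule four_lemma_kernel[where ?h1.0 = "\<lambda>x k. M1 (uu k) u x" and ?h2.0 = "\<lambda>x k. M2 (uu k) u x"
        and ?h3.0 = "\<lambda>x k. M3 (uu k) u x" and ?h4.0 = "\<lambda>x k. M4 (uu k) u x"
        and ?g1.0 = "\<lambda>z k. f1 (uu k) (z k)" and ?g2.0 = "\<lambda>z k. f2 (uu k) (z k)"
        and ?g3.0 = "\<lambda>z k. f3 (uu k) (z k)"])
    show "f2 u ` O2 u = {x \<in> O3 u. f3 u x = 0}" using E3 u(1) unfolding exact_at_def by blast
    show "f2 u (f1 u x) = 0" if "x \<in> O1 u" for x using exact_at_comp_zero[OF E2 u(1) that] .
    show "(\<lambda>z k. f1 (uu k) (z k)) ` invlim O1 M1 uu
        = {y \<in> invlim O2 M2 uu. (\<lambda>k. f2 (uu k) (y k)) = 0}"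
      by (rule invlim_exact[OF F1 F2 N1 N2 E2 P1 uu])
    show "(\<lambda>k. M2 (uu k) u (f1 u x)) = (\<lambda>k. f1 (uu k) (M1 (uu k) u x))" if "x \<in> O1 u" for x
      using invlim_cone_natural[OF N1 uu u that] .
    show "(\<lambda>k. M3 (uu k) u (f2 u x)) = (\<lambda>k. f2 (uu k) (M2 (uu k) u x))" if "x \<in> O2 u" for x
      using invlim_cone_natural[OF N2 uu u that] .
    show "(\<lambda>k. M4 (uu k) u (f3 u x)) = (\<lambda>k. f3 (uu k) (M3 (uu k) u x))" if "x \<in> O3 u" for x
      using invlim_cone_natural[OF N3 uu u that] .
    show "f1 u ` O1 u \<subseteq> O2 u" using is_nat_trans_in[OF N1 u(1)] by blast
    show "f3 u ` O3 u \<subseteq> O4 u" using is_nat_trans_in[OF N3 u(1)] by blast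
    show "(\<lambda>x k. M2 (uu k) u x) ` O2 u \<subseteq> invlim O2 M2 uu" using invlim_cone[OF F2 uu u] by blast
    show "(\<lambda>k. f3 (uu k) ((0 :: nat \<Rightarrow> _) k)) = 0"
      using is_nat_trans_zero[OF F3 N3 chain_in_mem[OF uu]] by (simp add: fun_eq_iff)
  qed (use surj1 inj2 kernel4 that in auto)
  show ?thesis
  proof (rule inj_onI)
    fix x y assume xy: "x \<in> O3 u" "y \<in> O3 u" "(\<lambda>k. M3 (uu k) u x) = (\<lambda>k. M3 (uu k) u y)"
    have "(\<lambda>k. M3 (uu k) u (x - y)) = 0" using invlim_cone_diff[OF F3 uu u xy(1,2)] xy(3) by simp
    then show "x = y" using kernel3[OF is_functor_diff_in[OF F3 u(1) xy(1,2)]] by simp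
  qed
qed

lemma restriction_surj_exact_middle:
  assumes F2: "is_functor M s2 O2 M2" and F3: "is_functor M s3 O3 M3"
    and F4: "is_functor M s4 O4 M4" and F5: "is_functor M s5 O5 M5"
    and N2: "is_nat_trans M s2 O2 M2 s3 O3 M3 f2" and N3: "is_nat_trans M s3 O3 M3 s4 O4 M4 f3"
    and N4: "is_nat_trans M s4 O4 M4 s5 O5 M5 f4"
    and E3: "exact_at M O2 f2 O3 f3" and E4: "exact_at M O3 f3 O4 f4" and P2: "pfd M s2 O2"
    and uu: "chain_in M uu" and u: "u \<in> M" "\<And>k. leM (uu k) u"
    and surj2: "invlim O2 M2 uu \<subseteq> (\<lambda>x k. M2 (uu k) u x) ` O2 u"
    and surj4: "invlim O4 M4 uu \<subseteq> (\<lambda>x k. M4 (uu k) u x) ` O4 u"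
    and inj5: "inj_on (\<lambda>x k. M5 (uu k) u x) (O5 u)"
  shows "invlim O3 M3 uu \<subseteq> (\<lambda>x k. M3 (uu k) u x) ` O3 u"
proof
  fix y assume y: "y \<in> invlim O3 M3 uu"
  have kernel5: "x = 0" if "x \<in> O5 u" "(\<lambda>k. M5 (uu k) u x) = 0" for x
    using inj_onD[OF inj5 _ that(1) is_functor_zero_in[OF F5 u(1)]] that(2)
      is_functor_map_zero[OF F5 chain_in_mem[OF uu] u] by (simp add: fun_eq_iff)
  show "y \<in> (\<lambda>x k. M3 (uu k) u x) ` O3 u"
  proof (rule four_lemma_surj[where ?h2.0 = "\<lambda>x k. M2 (uu k) u x" and ?h3.0 = "\<lambda>x k. M3 (uu k) u x"
        and ?h4.0 = "\<lambda>x k. M4 (uu k) u x" and ?h5.0 = "\<lambda>x k. M5 (uu k) u x"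
        and ?g2.0 = "\<lambda>z k. f2 (uu k) (z k)" and ?g3.0 = "\<lambda>z k. f3 (uu k) (z k)"
        and ?g4.0 = "\<lambda>z k. f4 (uu k) (z k)"])
    show "f3 u ` O3 u = {x \<in> O4 u. f4 u x = 0}" using E4 u(1) unfolding exact_at_def by blast
    show "(\<lambda>z k. f2 (uu k) (z k)) ` invlim O2 M2 uu
        = {y \<in> invlim O3 M3 uu. (\<lambda>k. f3 (uu k) (y k)) = 0}"
      by (rule invlim_exact[OF F2 F3 N2 N3 E3 P2 uu])
    show "(\<lambda>k. f4 (uu k) (f3 (uu k) (z k))) = 0" if "z \<in> invlim O3 M3 uu" for z
      using that exact_at_comp_zero[OF E4 chain_in_mem[OF uu]] unfolding invlim_def
      by (simp add: fun_eq_iff)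
    show "(\<lambda>k. M3 (uu k) u (f2 u x)) = (\<lambda>k. f2 (uu k) (M2 (uu k) u x))" if "x \<in> O2 u" for x
      using invlim_cone_natural[OF N2 uu u that] .
    show "(\<lambda>k. M4 (uu k) u (f3 u x)) = (\<lambda>k. f3 (uu k) (M3 (uu k) u x))" if "x \<in> O3 u" for x
      using invlim_cone_natural[OF N3 uu u that] .
    show "(\<lambda>k. M5 (uu k) u (f4 u x)) = (\<lambda>k. f4 (uu k) (M4 (uu k) u x))" if "x \<in> O4 u" for x
      using invlim_cone_natural[OF N4 uu u that] .
    show "f2 u ` O2 u \<subseteq> O3 u" using is_nat_trans_in[OF N2 u(1)] by blast
    show "f4 u ` O4 u \<subseteq> O5 u" using is_nat_trans_in[OF N4 u(1)] by blast
    show "(\<lambda>x k. M3 (uu k) u x) ` O3 u \<subseteq> invlim O3 M3 uu" using invlim_cone[OF F3 uu u] by blast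
    show "(\<lambda>z k. f3 (uu k) (z k)) ` invlim O3 M3 uu \<subseteq> invlim O4 M4 uu"
      using invlim_nat_trans[OF N3 uu] by blast
    show "x + x' \<in> O3 u \<and> (\<lambda>k. M3 (uu k) u (x + x')) = (\<lambda>k. M3 (uu k) u x) + (\<lambda>k. M3 (uu k) u x')"
      if "x \<in> O3 u" "x' \<in> O3 u" for x x'
      using is_functor_add_in[OF F3 u(1) that] invlim_cone_add[OF F3 uu u that] by blast
    show "z - z' \<in> invlim O3 M3 uu \<and> (\<lambda>k. f3 (uu k) ((z - z') k))
        = (\<lambda>k. f3 (uu k) (z k)) - (\<lambda>k. f3 (uu k) (z' k))"
      if "z \<in> invlim O3 M3 uu" "z' \<in> invlim O3 M3 uu" for z z'
      using invlim_diff[OF F3 uu that] invlim_nat_trans_diff[OF F3 N3 uu that] by blast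
  qed (use surj2 surj4 kernel5 y in auto)
qed

lemma restriction_bij_exact_middle:
  assumes F1: "is_functor M s1 O1 M1" and F2: "is_functor M s2 O2 M2"
    and F3: "is_functor M s3 O3 M3" and F4: "is_functor M s4 O4 M4"
    and F5: "is_functor M s5 O5 M5"
    and N1: "is_nat_trans M s1 O1 M1 s2 O2 M2 f1" and N2: "is_nat_trans M s2 O2 M2 s3 O3 M3 f2"
    and N3: "is_nat_trans M s3 O3 M3 s4 O4 M4 f3" and N4: "is_nat_trans M s4 O4 M4 s5 O5 M5 f4"
    and E2: "exact_at M O1 f1 O2 f2" and E3: "exact_at M O2 f2 O3 f3" and E4: "exact_at M O3 f3 O4 f4"
    and P1: "pfd M s1 O1" and P2: "pfd M s2 O2"
    and uu: "chain_in M uu" and u: "u \<in> M" "\<And>k. leM (uu k) u"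
    and bij1: "bij_betw (\<lambda>x k. M1 (uu k) u x) (O1 u) (invlim O1 M1 uu)"
    and bij2: "bij_betw (\<lambda>x k. M2 (uu k) u x) (O2 u) (invlim O2 M2 uu)"
    and bij4: "bij_betw (\<lambda>x k. M4 (uu k) u x) (O4 u) (invlim O4 M4 uu)"
    and bij5: "bij_betw (\<lambda>x k. M5 (uu k) u x) (O5 u) (invlim O5 M5 uu)"
  shows "bij_betw (\<lambda>x k. M3 (uu k) u x) (O3 u) (invlim O3 M3 uu)"
  unfolding bij_betw_def
proof (intro conjI equalityI)
  show "inj_on (\<lambda>x k. M3 (uu k) u x) (O3 u)"
    using restriction_inj_exact_middle[OF F1 F2 F3 F4 N1 N2 N3 E2 E3 P1 uu u]
      bij_betw_imp_surj_on[OF bij1] bij_betw_imp_inj_on[OF bij2] bij_betw_imp_inj_on[OF bij4]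
    by blast
  show "(\<lambda>x k. M3 (uu k) u x) ` O3 u \<subseteq> invlim O3 M3 uu" using invlim_cone[OF F3 uu u] by blast
  show "invlim O3 M3 uu \<subseteq> (\<lambda>x k. M3 (uu k) u x) ` O3 u"
    using restriction_surj_exact_middle[OF F2 F3 F4 F5 N2 N3 N4 E3 E4 P2 uu u]
      bij_betw_imp_surj_on[OF bij2] bij_betw_imp_surj_on[OF bij4] bij_betw_imp_inj_on[OF bij5]
    by blast
qed

lemma closed_Mstrip: "closed (Mstrip a b)"
proof -
  have "Mstrip a b = (\<lambda>p. fst p + snd p) -` {a..b}" by (auto simp: Mstrip_def)
  then show ?thesis by (simp add: closed_vimage continuous_on_add continuous_on_fst continuous_on_snd)
qed

lemma leM_chain_mono:
  assumes "\<And>k. leM (uu k) (uu (Suc k))" "k \<le> l"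
  shows "leM (uu k) (uu l)"
proof -
  have "decseq (\<lambda>k. fst (uu k))" "incseq (\<lambda>k. snd (uu k))"
    using assms(1) by (auto intro: decseq_SucI incseq_SucI simp: leM_def)
  then show ?thesis using assms(2) unfolding decseq_def incseq_def leM_def by simp
qed

lemma leM_chain_le_limit:
  assumes "\<And>k. leM (uu k) (uu (Suc k))" "uu \<longlonglongrightarrow> u"
  shows "leM (uu k) u"
proof -
  have "decseq (\<lambda>k. fst (uu k))" "incseq (\<lambda>k. snd (uu k))"
    using assms(1) by (auto intro: decseq_SucI incseq_SucI simp: leM_def)
  moreover have "(\<lambda>k. fst (uu k)) \<longlonglongrightarrow> fst u" "(\<lambda>k. snd (uu k)) \<longlonglongrightarrow> snd u"
    using assms(2) by (auto intro: tendsto_intros)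
  ultimately show ?thesis
    using decseq_ge[of "\<lambda>k. fst (uu k)"] incseq_le[of "\<lambda>k. snd (uu k)"] unfolding leM_def by simp
qed

lemma seq_contD:
  assumes "seq_cont M Ob Mor" "\<And>k. uu k \<in> M" "\<And>k. leM (uu k) (uu (Suc k))" "uu \<longlonglongrightarrow> u"
  shows "bij_betw (\<lambda>x k. Mor (uu k) u x) (Ob u) (invlim Ob Mor uu)"
  using assms unfolding seq_cont_def by blast

theorem lemma3p20:
  fixes a b :: real
    and s1 :: "'k::field \<Rightarrow> 'v1::ab_group_add \<Rightarrow> 'v1" and O1 :: "real \<times> real \<Rightarrow> 'v1 set"
    and M1 :: "real \<times> real \<Rightarrow> real \<times> real \<Rightarrow> 'v1 \<Rightarrow> 'v1"
    and s2 :: "'k \<Rightarrow> 'v2::ab_group_add \<Rightarrow> 'v2" and O2 :: "real \<times> real \<Rightarrow> 'v2 set"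
    and M2 :: "real \<times> real \<Rightarrow> real \<times> real \<Rightarrow> 'v2 \<Rightarrow> 'v2"
    and s3 :: "'k \<Rightarrow> 'v3::ab_group_add \<Rightarrow> 'v3" and O3 :: "real \<times> real \<Rightarrow> 'v3 set"
    and M3 :: "real \<times> real \<Rightarrow> real \<times> real \<Rightarrow> 'v3 \<Rightarrow> 'v3"
    and s4 :: "'k \<Rightarrow> 'v4::ab_group_add \<Rightarrow> 'v4" and O4 :: "real \<times> real \<Rightarrow> 'v4 set"
    and M4 :: "real \<times> real \<Rightarrow> real \<times> real \<Rightarrow> 'v4 \<Rightarrow> 'v4"
    and s5 :: "'k \<Rightarrow> 'v5::ab_group_add \<Rightarrow> 'v5" and O5 :: "real \<times> real \<Rightarrow> 'v5 set"
    and M5 :: "real \<times> real \<Rightarrow> real \<times> real \<Rightarrow> 'v5 \<Rightarrow> 'v5"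
    and f1 :: "real \<times> real \<Rightarrow> 'v1 \<Rightarrow> 'v2" and f2 :: "real \<times> real \<Rightarrow> 'v2 \<Rightarrow> 'v3"
    and f3 :: "real \<times> real \<Rightarrow> 'v3 \<Rightarrow> 'v4" and f4 :: "real \<times> real \<Rightarrow> 'v4 \<Rightarrow> 'v5"
  assumes "a < b"
    and F1: "is_functor (Mstrip a b) s1 O1 M1"
    and F2: "is_functor (Mstrip a b) s2 O2 M2"
    and F3: "is_functor (Mstrip a b) s3 O3 M3"
    and F4: "is_functor (Mstrip a b) s4 O4 M4"
    and F5: "is_functor (Mstrip a b) s5 O5 M5"
    and N1: "is_nat_trans (Mstrip a b) s1 O1 M1 s2 O2 M2 f1"
    and N2: "is_nat_trans (Mstrip a b) s2 O2 M2 s3 O3 M3 f2"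
    and N3: "is_nat_trans (Mstrip a b) s3 O3 M3 s4 O4 M4 f3"
    and N4: "is_nat_trans (Mstrip a b) s4 O4 M4 s5 O5 M5 f4"
    and E2: "exact_at (Mstrip a b) O1 f1 O2 f2"
    and E3: "exact_at (Mstrip a b) O2 f2 O3 f3"
    and E4: "exact_at (Mstrip a b) O3 f3 O4 f4"
    and P1: "pfd (Mstrip a b) s1 O1" and C1: "seq_cont (Mstrip a b) O1 M1"
    and P2: "pfd (Mstrip a b) s2 O2" and C2: "seq_cont (Mstrip a b) O2 M2"
    and P4: "pfd (Mstrip a b) s4 O4" and C4: "seq_cont (Mstrip a b) O4 M4"
    and P5: "pfd (Mstrip a b) s5 O5" and C5: "seq_cont (Mstrip a b) O5 M5"
  shows "pfd (Mstrip a b) s3 O3 \<and> seq_cont (Mstrip a b) O3 M3"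
proof
  show "pfd (Mstrip a b) s3 O3" by (rule pfd_exact_middle[OF F2 F3 F4 N2 N3 E3 P2 P4])
  show "seq_cont (Mstrip a b) O3 M3"
    unfolding seq_cont_def
  proof (intro allI impI)
    fix uu u assume "(\<forall>k. uu k \<in> Mstrip a b) \<and> (\<forall>k. leM (uu k) (uu (Suc k))) \<and> uu \<longlonglongrightarrow> u"
    then have uM: "\<And>k. uu k \<in> Mstrip a b" and inc: "\<And>k. leM (uu k) (uu (Suc k))"
      and lim: "uu \<longlonglongrightarrow> u" by blast+
    have uu: "chain_in (Mstrip a b) uu" unfolding chain_in_def using uM leM_chain_mono[of uu, OF inc] by blast
    have u: "u \<in> Mstrip a b" "\<And>k. leM (uu k) u"
      using closed_sequentially[OF closed_Mstrip uM lim] leM_chain_le_limit[of uu, OF inc lim] by blast+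
    show "bij_betw (\<lambda>x k. M3 (uu k) u x) (O3 u) (invlim O3 M3 uu)"
      using restriction_bij_exact_middle[OF F1 F2 F3 F4 F5 N1 N2 N3 N4 E2 E3 E4 P1 P2 uu u]
        seq_contD[OF C1 uM inc lim] seq_contD[OF C2 uM inc lim]
        seq_contD[OF C4 uM inc lim] seq_contD[OF C5 uM inc lim]
      by blast
  qed
qed

end
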